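(* Let $(G,k,d)$ be an instance of \textsc{Contraction(vc)} such that $G$ is connected, $k<\mathrm{rank}(G)$ and $2d\le k$. Then $(G,k,d)$ is a Yes-instance if and only if $d<\mathrm{vc}(G)$.
   Context: All graphs are finite, simple and undirected. $\mathrm{vc}(G)$ denotes the minimum size of a vertex cover of $G$. For an edge $e=uv$, $G/e$ is obtained from $G$ by deleting $u$ and $v$ and adding a new vertex adjacent to every vertex of $(N(u)\cup N(v))\setminus\{u,v\}$ (no loops or parallel edges are created); for $F\subseteq E(G)$, $G/F$ denotes the graph obtained by contracting all edges of $F$. $\mathrm{rank}(G)$ is $|V(G)|$ minus the number of connected components of $G$. An instance $(G,k,d)$ of \textsc{Contraction(vc)} (graph $G$, non-negative integers $k,d$) is a Yes-instance iff there exists $F\subseteq E(G)$ with $|F|\le k$ and $\mathrm{vc}(G/F)\le \mathrm{vc}(G)-d$. *)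

theory Defs
  imports Main
begin

definition simple_graph :: "'a set \<Rightarrow> 'a set set \<Rightarrow> bool" where
  "simple_graph V E \<longleftrightarrow> finite V \<and> (\<forall>e\<in>E. \<exists>u v. u \<noteq> v \<and> u \<in> V \<and> v \<in> V \<and> e = {u, v})"

definition vertex_cover :: "'a set \<Rightarrow> 'a set set \<Rightarrow> 'a set \<Rightarrow> bool" where
  "vertex_cover V E C \<longleftrightarrow> C \<subseteq> V \<and> (\<forall>e\<in>E. e \<inter> C \<noteq> {})"

definition vc :: "'a set \<Rightarrow> 'a set set \<Rightarrow> nat" where
  "vc V E = Min (card ` {C. vertex_cover V E C})"

definition edge_rel :: "'a set set \<Rightarrow> ('a \<times> 'a) set" where
  "edge_rel F = {(x, y). {x, y} \<in> F \<and> x \<noteq> y}"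

definition comp :: "'a set \<Rightarrow> 'a set set \<Rightarrow> 'a \<Rightarrow> 'a set" where
  "comp V F u = {v \<in> V. (u, v) \<in> (edge_rel F)\<^sup>*}"

definition components :: "'a set \<Rightarrow> 'a set set \<Rightarrow> 'a set set" where
  "components V F = comp V F ` V"

definition connected_graph :: "'a set \<Rightarrow> 'a set set \<Rightarrow> bool" where
  "connected_graph V E \<longleftrightarrow> (\<forall>u\<in>V. \<forall>v\<in>V. (u, v) \<in> (edge_rel E)\<^sup>*)"

definition graph_rank :: "'a set \<Rightarrow> 'a set set \<Rightarrow> nat" where
  "graph_rank V E = card V - card (components V E)"

text \<open>Contraction G/F of an edge set F: each connected component of (V,F) becomes
  one vertex; two distinct new vertices are adjacent iff some edge of G joins them
  (no loops, no parallel edges).\<close>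
definition contract_V :: "'a set \<Rightarrow> 'a set set \<Rightarrow> 'a set set" where
  "contract_V V F = components V F"

definition contract_E :: "'a set \<Rightarrow> 'a set set \<Rightarrow> 'a set set \<Rightarrow> 'a set set set" where
  "contract_E V E F = {{comp V F u, comp V F v} | u v. {u, v} \<in> E \<and> comp V F u \<noteq> comp V F v}"

text \<open>(G,k,d) is a Yes-instance of Contraction(vc): some F \<subseteq> E with |F| \<le> k
  and vc(G/F) \<le> vc(G) - d (integer arithmetic, written without subtraction).\<close>
definition contraction_vc_yes :: "'a set \<Rightarrow> 'a set set \<Rightarrow> nat \<Rightarrow> nat \<Rightarrow> bool" where
  "contraction_vc_yes V E k d \<longleftrightarrow>
     (\<exists>F. F \<subseteq> E \<and> card F \<le> k \<and> vc (contract_V V F) (contract_E V E F) + d \<le> vc V E)"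

end

theory Submission
  imports Defs
begin

text \<open>If some F with |F| \<le> k < |V| - 1 achieves any decrease, (V,F) is disconnected,
  so an edge of the connected graph G survives in G/F and vc(G/F) \<ge> 1; hence d < vc(G).
  Conversely, let C be a minimum vertex cover with |C| > d. Since C covers a connected
  graph, every proper subset T of C with T \<noteq> {} has a vertex of C - T within distance two,
  so d + 1 vertices of C can be tied together by at most 2d \<le> k edges. Contracting these
  edges merges the d + 1 vertices into one, and the image of C is a vertex cover of G/F
  of size at most |C| - d.\<close>

definition connects :: "'a set set \<Rightarrow> 'a set \<Rightarrow> bool" where
  "connects F T \<longleftrightarrow> (\<forall>u\<in>T. \<forall>v\<in>T. (u, v) \<in> (edge_rel F)\<^sup>*)"

lemma sym_edge_rel: "sym (edge_rel F)"
  by (auto simp: sym_def edge_rel_def insert_commute)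

lemma edge_rel_mono: "F \<subseteq> F' \<Longrightarrow> edge_rel F \<subseteq> edge_rel F'"
  by (auto simp: edge_rel_def)

lemma rtrancl_edge_rel_sym: "(x, y) \<in> (edge_rel F)\<^sup>* \<Longrightarrow> (y, x) \<in> (edge_rel F)\<^sup>*"
  by (meson sym_edge_rel sym_rtrancl symD)

lemma connects_mono: "F \<subseteq> F' \<Longrightarrow> connects F T \<Longrightarrow> connects F' T"
  unfolding connects_def by (meson edge_rel_mono rtrancl_mono subsetD)

lemma connects_insert:
  assumes "connects F T" "t \<in> T" "(t, c) \<in> (edge_rel F)\<^sup>*"
  shows "connects F (insert c T)"
proof -
  have "(u, c) \<in> (edge_rel F)\<^sup>*" if "u \<in> T" for u
    using assms that unfolding connects_def by (meson rtrancl_trans)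
  then show ?thesis
    using assms(1) unfolding connects_def by (auto intro: rtrancl_edge_rel_sym)
qed

lemma comp_eq_if_connects:
  assumes "connects F T" "u \<in> T" "v \<in> T"
  shows "comp V F u = comp V F v"
  using assms unfolding connects_def comp_def by (blast intro: rtrancl_trans)

lemma card_comp_image_le_one:
  assumes "connects F T"
  shows "card (comp V F ` T) \<le> 1"
proof (cases "T = {}")
  case False
  then obtain t where "t \<in> T"
    by blast
  then have "comp V F ` T \<subseteq> {comp V F t}"
    using comp_eq_if_connects[OF assms] by blast
  then show ?thesis
    using card_mono[of "{comp V F t}"] by fastforce
qed simp

text \<open>Each vertex other than r is sent to the first edge of a shortest path towards r;
  this map is injective because the distance to r strictly drops along that edge.\<close>
lemma card_le_card_if_connects:
  assumes "finite F" "connects F V"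
  shows "card V - 1 \<le> card F"
proof (cases "V = {}")
  case False
  then obtain r where "r \<in> V"
    by blast
  let ?R = "edge_rel F"
  define dist where "dist v = (LEAST n. (v, r) \<in> ?R ^^ n)" for v
  define next_vertex where
    "next_vertex v = (SOME w. (v, w) \<in> ?R \<and> (w, r) \<in> ?R ^^ (dist v - 1))" for v
  have descent: "(v, next_vertex v) \<in> ?R \<and> dist (next_vertex v) < dist v" if v: "v \<in> V - {r}" for v
  proof -
    have "(v, r) \<in> ?R\<^sup>*"
      using assms(2) \<open>r \<in> V\<close> v unfolding connects_def by blast
    then obtain n where "(v, r) \<in> ?R ^^ n"
      using rtrancl_power by blast
    then have dv: "(v, r) \<in> ?R ^^ dist v"
      unfolding dist_def by (rule LeastI)
    then obtain m where m: "dist v = Suc m"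
      using v by (cases "dist v") auto
    with dv have "\<exists>w. (v, w) \<in> ?R \<and> (w, r) \<in> ?R ^^ (dist v - 1)"
      by (metis diff_Suc_1 relpow_Suc_D2)
    then have nv: "(v, next_vertex v) \<in> ?R \<and> (next_vertex v, r) \<in> ?R ^^ (dist v - 1)"
      unfolding next_vertex_def by (rule someI_ex)
    then have "dist (next_vertex v) \<le> dist v - 1"
      unfolding dist_def[of "next_vertex v"] by (simp add: Least_le)
    with nv m show ?thesis
      by auto
  qed
  have "inj_on (\<lambda>v. {v, next_vertex v}) (V - {r})"
  proof (rule inj_onI, rule ccontr)
    fix x y
    assume "x \<in> V - {r}" "y \<in> V - {r}" "{x, next_vertex x} = {y, next_vertex y}" "x \<noteq> y"
    then show False
      using descent[of x] descent[of y] by (auto simp: doubleton_eq_iff)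
  qed
  moreover have "(\<lambda>v. {v, next_vertex v}) ` (V - {r}) \<subseteq> F"
    using descent by (auto simp: edge_rel_def)
  ultimately have "card (V - {r}) \<le> card F"
    using assms(1) by (rule card_inj_on_le)
  then show ?thesis
    using \<open>r \<in> V\<close> by simp
qed simp

lemma rtrancl_leaving_step:
  "(a, b) \<in> R\<^sup>* \<Longrightarrow> (a, b) \<notin> S\<^sup>* \<Longrightarrow> \<exists>x y. (x, y) \<in> R \<and> (a, x) \<in> S\<^sup>* \<and> (a, y) \<notin> S\<^sup>*"
proof (induction rule: rtrancl_induct)
  case (step y z)
  then show ?case
    by (cases "(a, y) \<in> S\<^sup>*") blast+
qed simp

text \<open>Walking from T towards a cover vertex outside T, the first vertex leaving T is
  either in C or, being uncovered, is followed by a vertex of C.\<close>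
lemma cover_vertex_within_distance_two:
  assumes cover: "\<forall>e\<in>E. e \<inter> C \<noteq> {}"
    and path: "(t0, c0) \<in> (edge_rel E)\<^sup>*" and "t0 \<in> T" "c0 \<in> C - T"
  shows "\<exists>c\<in>C - T. \<exists>t\<in>T. (t, c) \<in> edge_rel E \<or>
           (\<exists>w. (t, w) \<in> edge_rel E \<and> (w, c) \<in> edge_rel E)"
    (is "?found")
proof -
  have covered: "y \<in> C \<or> z \<in> C" if "(y, z) \<in> edge_rel E" for y z
  proof -
    have "{y, z} \<in> E"
      using that by (simp add: edge_rel_def)
    then have "{y, z} \<inter> C \<noteq> {}"
      using cover by blast
    then show ?thesis
      by auto
  qed
  have "?found \<or> y \<in> T \<or> (y \<notin> C \<and> (\<exists>t\<in>T. (t, y) \<in> edge_rel E))"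
    if "(t0, y) \<in> (edge_rel E)\<^sup>*" for y
    using that
  proof (induction rule: rtrancl_induct)
    case base
    then show ?case
      using \<open>t0 \<in> T\<close> by simp
  next
    case (step y z)
    consider "?found" | "z \<in> T" | "z \<in> C - T" "y \<in> T" | "z \<notin> C" "y \<in> T"
      | t where "z \<in> C - T" "t \<in> T" "(t, y) \<in> edge_rel E"
      using step.IH covered[OF step.hyps(2)] by blast
    then show ?case
    proof cases
      case 3
      then have ?found
        using step.hyps(2) by blast
      then show ?thesis ..
    next
      case 4
      then show ?thesis
        using step.hyps(2) by blast
    next
      case 5
      then have ?found
        using step.hyps(2) by blast
      then show ?thesis ..
    qed simp_all
  qed
  then show ?thesis
    using path \<open>c0 \<in> C - T\<close> by blast
qed

lemma short_path_edges:
  assumes "(t, c) \<in> edge_rel E \<or> (\<exists>w. (t, w) \<in> edge_rel E \<and> (w, c) \<in> edge_rel E)"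
  shows "\<exists>P\<subseteq>E. card P \<le> 2 \<and> (t, c) \<in> (edge_rel P)\<^sup>*"
  using assms
proof
  assume "(t, c) \<in> edge_rel E"
  then show ?thesis
    by (intro exI[of _ "{{t, c}}"]) (auto simp: edge_rel_def)
next
  assume "\<exists>w. (t, w) \<in> edge_rel E \<and> (w, c) \<in> edge_rel E"
  then obtain w where tw: "(t, w) \<in> edge_rel E" and wc: "(w, c) \<in> edge_rel E"
    by blast
  let ?P = "{{t, w}, {w, c}}"
  have "(t, w) \<in> edge_rel ?P" "(w, c) \<in> edge_rel ?P"
    using tw wc by (auto simp: edge_rel_def)
  then have "(t, c) \<in> (edge_rel ?P)\<^sup>*"
    by (meson converse_rtrancl_into_rtrancl r_into_rtrancl)
  moreover have "card ?P \<le> 2"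
    by (simp add: card_insert_if)
  ultimately show ?thesis
    using tw wc by (intro exI[of _ ?P]) (auto simp: edge_rel_def)
qed

lemma connected_cover_subset:
  assumes "connected_graph V E" "vertex_cover V E C" "finite C" "m < card C"
  shows "\<exists>F T. F \<subseteq> E \<and> card F \<le> 2 * m \<and> T \<subseteq> C \<and> card T = Suc m \<and> connects F T"
  using \<open>m < card C\<close>
proof (induction m)
  case 0
  then obtain c where "c \<in> C"
    by (metis card.empty ex_in_conv less_irrefl)
  moreover have "connects {} {c}"
    by (simp add: connects_def)
  ultimately show ?case
    by (intro exI[of _ "{}"] exI[of _ "{c}"]) simp
next
  case (Suc m)
  then obtain F T where F: "F \<subseteq> E" "card F \<le> 2 * m" and T: "T \<subseteq> C" "card T = Suc m"
    and "connects F T"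
    by (meson Suc_lessD)
  have cover: "\<forall>e\<in>E. e \<inter> C \<noteq> {}" and "C \<subseteq> V"
    using assms(2) unfolding vertex_cover_def by auto
  have "finite T"
    using T(1) \<open>finite C\<close> finite_subset by blast
  have "\<not> C \<subseteq> T"
    using card_mono[OF \<open>finite T\<close>, of C] T(2) Suc.prems by linarith
  then obtain c0 where c0: "c0 \<in> C - T"
    by blast
  obtain t0 where t0: "t0 \<in> T"
    using T(2) by (metis card.empty ex_in_conv nat.distinct(1))
  have "t0 \<in> V" "c0 \<in> V"
    using t0 c0 T(1) \<open>C \<subseteq> V\<close> by auto
  then have "(t0, c0) \<in> (edge_rel E)\<^sup>*"
    using assms(1) unfolding connected_graph_def by blast
  from cover_vertex_within_distance_two[OF cover this t0 c0]
  obtain c t where c: "c \<in> C - T" and "t \<in> T"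
    and "(t, c) \<in> edge_rel E \<or> (\<exists>w. (t, w) \<in> edge_rel E \<and> (w, c) \<in> edge_rel E)"
    by blast
  then obtain P where P: "P \<subseteq> E" "card P \<le> 2" "(t, c) \<in> (edge_rel P)\<^sup>*"
    using short_path_edges by metis
  have "(edge_rel P)\<^sup>* \<subseteq> (edge_rel (F \<union> P))\<^sup>*"
    by (intro rtrancl_mono edge_rel_mono) simp
  with P(3) have "(t, c) \<in> (edge_rel (F \<union> P))\<^sup>*"
    by (rule subsetD[rotated])
  with connects_mono[OF Un_upper1 \<open>connects F T\<close>] \<open>t \<in> T\<close>
  have "connects (F \<union> P) (insert c T)"
    by (rule connects_insert)
  moreover have "card (F \<union> P) \<le> 2 * Suc m"
    using card_Un_le[of F P] F(2) P(2) by simp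
  moreover have "F \<union> P \<subseteq> E" "insert c T \<subseteq> C" "card (insert c T) = Suc (Suc m)"
    using F(1) P(1) T c \<open>finite T\<close> by auto
  ultimately show ?case
    by blast
qed

lemma simple_graph_edge_subset: "simple_graph V E \<Longrightarrow> e \<in> E \<Longrightarrow> e \<subseteq> V"
  unfolding simple_graph_def by fastforce

lemma finite_edges:
  assumes "simple_graph V E"
  shows "finite E"
proof -
  have "E \<subseteq> Pow V"
    using simple_graph_edge_subset[OF assms] by blast
  with assms show ?thesis
    unfolding simple_graph_def by (meson finite_Pow_iff finite_subset)
qed

lemma vertex_cover_self: "simple_graph V E \<Longrightarrow> vertex_cover V E V"
  unfolding simple_graph_def vertex_cover_def by blast

lemma vertex_cover_subset: "vertex_cover V E C \<Longrightarrow> C \<subseteq> V"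
  by (simp add: vertex_cover_def)

lemma finite_vertex_cover_sizes:
  assumes "finite V"
  shows "finite (card ` {C. vertex_cover V E C})"
proof -
  have "{C. vertex_cover V E C} \<subseteq> Pow V"
    using vertex_cover_subset by blast
  then show ?thesis
    using assms by (meson finite_Pow_iff finite_imageI finite_subset)
qed

lemma vc_le_card:
  assumes "finite V" "vertex_cover V E C"
  shows "vc V E \<le> card C"
proof -
  have "card C \<in> card ` {C. vertex_cover V E C}"
    using assms(2) by (rule imageI[OF CollectI])
  then show ?thesis
    unfolding vc_def using finite_vertex_cover_sizes[OF assms(1)] by (rule Min_le[rotated])
qed

lemma vc_attained:
  assumes "finite V" "vertex_cover V E C0"
  obtains C where "vertex_cover V E C" "card C = vc V E"
proof -
  have "card C0 \<in> card ` {C. vertex_cover V E C}"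
    using assms(2) by (rule imageI[OF CollectI])
  then have "vc V E \<in> card ` {C. vertex_cover V E C}"
    unfolding vc_def using finite_vertex_cover_sizes[OF assms(1)] by (intro Min_in) auto
  then obtain C where "vertex_cover V E C" "vc V E = card C"
    by blast
  then show ?thesis
    using that by simp
qed

lemma finite_contract_V: "finite V \<Longrightarrow> finite (contract_V V F)"
  by (simp add: contract_V_def components_def)

lemma vertex_cover_contract:
  assumes "vertex_cover V E C"
  shows "vertex_cover (contract_V V F) (contract_E V E F) (comp V F ` C)"
  unfolding vertex_cover_def
proof (intro conjI ballI)
  show "comp V F ` C \<subseteq> contract_V V F"
    using assms by (auto simp: vertex_cover_def contract_V_def components_def)
next
  fix e
  assume "e \<in> contract_E V E F"
  then obtain u v where e: "e = {comp V F u, comp V F v}" "{u, v} \<in> E"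
    unfolding contract_E_def by blast
  have "{u, v} \<inter> C \<noteq> {}"
    using assms e(2) unfolding vertex_cover_def by blast
  then show "e \<inter> comp V F ` C \<noteq> {}"
    using e(1) by blast
qed

lemma vc_contract_pos:
  assumes "simple_graph V E" "{x, y} \<in> E" "comp V F x \<noteq> comp V F y"
  shows "0 < vc (contract_V V F) (contract_E V E F)"
proof -
  have fin: "finite (contract_V V F)"
    using assms(1) finite_contract_V by (auto simp: simple_graph_def)
  obtain C where C: "vertex_cover (contract_V V F) (contract_E V E F) C"
      "card C = vc (contract_V V F) (contract_E V E F)"
    using vc_attained[OF fin vertex_cover_contract[OF vertex_cover_self[OF assms(1)]]] by blast
  have "{comp V F x, comp V F y} \<in> contract_E V E F"
    using assms(2,3) unfolding contract_E_def by blast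
  then have "C \<noteq> {}"
    using C(1) unfolding vertex_cover_def by blast
  moreover have "finite C"
    using C(1) fin unfolding vertex_cover_def by (meson finite_subset)
  ultimately show ?thesis
    using C(2) by (metis card_gt_0_iff)
qed

lemma graph_rank_connected:
  assumes "connected_graph V E" "V \<noteq> {}"
  shows "graph_rank V E = card V - 1"
proof -
  have "comp V E u = V" if "u \<in> V" for u
    using assms(1) that unfolding comp_def connected_graph_def by blast
  then have "components V E = {V}"
    unfolding components_def using assms(2) by blast
  then show ?thesis
    by (simp add: graph_rank_def)
qed

lemma vc_contract_pos_if_not_connects:
  assumes G: "simple_graph V E" "connected_graph V E" and "\<not> connects F V"
  shows "0 < vc (contract_V V F) (contract_E V E F)"
proof -
  obtain a b where "a \<in> V" "b \<in> V" "(a, b) \<notin> (edge_rel F)\<^sup>*"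
    using assms(3) unfolding connects_def by blast
  moreover have "(a, b) \<in> (edge_rel E)\<^sup>*"
    using G(2) \<open>a \<in> V\<close> \<open>b \<in> V\<close> unfolding connected_graph_def by blast
  ultimately obtain x y where xy: "(x, y) \<in> edge_rel E" "(a, x) \<in> (edge_rel F)\<^sup>*"
      "(a, y) \<notin> (edge_rel F)\<^sup>*"
    using rtrancl_leaving_step by metis
  have "{x, y} \<in> E"
    using xy(1) by (simp add: edge_rel_def)
  then have "y \<in> V"
    using simple_graph_edge_subset[OF G(1)] by blast
  then have "comp V F x \<noteq> comp V F y"
    using xy(2,3) unfolding comp_def by (blast intro: rtrancl_trans)
  with G(1) \<open>{x, y} \<in> E\<close> show ?thesis
    by (rule vc_contract_pos)
qed

lemma less_vc_if_contraction_vc_yes: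
  assumes G: "simple_graph V E" "connected_graph V E" and "k < graph_rank V E"
    and "contraction_vc_yes V E k d"
  shows "d < vc V E"
proof -
  obtain F where F: "F \<subseteq> E" "card F \<le> k"
      and decrease: "vc (contract_V V F) (contract_E V E F) + d \<le> vc V E"
    using assms(4) unfolding contraction_vc_yes_def by blast
  have "V \<noteq> {}"
    using assms(3) by (auto simp: graph_rank_def)
  have "\<not> connects F V"
  proof
    assume "connects F V"
    then have "card V - 1 \<le> card F"
      using card_le_card_if_connects F(1) finite_edges[OF G(1)] by (meson finite_subset)
    then show False
      using F(2) assms(3) graph_rank_connected[OF G(2) \<open>V \<noteq> {}\<close>] by linarith
  qed
  with G have "0 < vc (contract_V V F) (contract_E V E F)"
    by (rule vc_contract_pos_if_not_connects)
  then show ?thesis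
    using decrease by linarith
qed

lemma contraction_vc_yes_if_less_vc:
  assumes G: "simple_graph V E" "connected_graph V E" and "2 * d \<le> k" "d < vc V E"
  shows "contraction_vc_yes V E k d"
proof -
  have "finite V"
    using G(1) by (simp add: simple_graph_def)
  obtain C where C: "vertex_cover V E C" "card C = vc V E"
    using vc_attained[OF \<open>finite V\<close> vertex_cover_self[OF G(1)]] by blast
  have "finite C"
    using vertex_cover_subset[OF C(1)] \<open>finite V\<close> by (rule finite_subset)
  moreover have "d < card C"
    using assms(4) C(2) by simp
  ultimately obtain F T where F: "F \<subseteq> E" "card F \<le> 2 * d"
    and T: "T \<subseteq> C" "card T = Suc d" "connects F T"
    using connected_cover_subset[OF G(2) C(1)] by metis
  have "comp V F ` C = comp V F ` T \<union> comp V F ` (C - T)"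
    using T(1) by blast
  then have "card (comp V F ` C) \<le> card (comp V F ` T) + card (comp V F ` (C - T))"
    by (simp add: card_Un_le)
  moreover have "card (comp V F ` T) \<le> 1"
    using T(3) by (rule card_comp_image_le_one)
  moreover have "card (comp V F ` (C - T)) \<le> card (C - T)"
    using \<open>finite C\<close> by (simp add: card_image_le)
  moreover have "card (C - T) = card C - Suc d"
    using T(1,2) \<open>finite C\<close> by (simp add: card_Diff_subset finite_subset)
  ultimately have "card (comp V F ` C) + d \<le> vc V E"
    using C(2) assms(4) by linarith
  moreover have "vc (contract_V V F) (contract_E V E F) \<le> card (comp V F ` C)"
    using vc_le_card[OF finite_contract_V[OF \<open>finite V\<close>] vertex_cover_contract[OF C(1)]] .
  ultimately show ?thesis
    unfolding contraction_vc_yes_def using F assms(3) by auto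
qed

theorem mainTheorem6:
  fixes V :: "'a set" and E :: "'a set set" and k d :: nat
  assumes "simple_graph V E"
    and "connected_graph V E"
    and "k < graph_rank V E"
    and "2 * d \<le> k"
  shows "contraction_vc_yes V E k d \<longleftrightarrow> d < vc V E"
  using assms less_vc_if_contraction_vc_yes contraction_vc_yes_if_less_vc by blast

end
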